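(* There is an absolute constant $C>0$ such that the following holds. Let $P=P_0\setminus\bigcup_{i=1}^h\operatorname{int}(P_i)$, where $P_0$ is a convex polygon and $P_1,\dots,P_h$ are pairwise disjoint $\lambda$-fat convex polygons in the interior of $P_0$, for some $\lambda\in(0,1]$. Then for all $s,t\in P$, ${\rm geod}(s,t)\le C\lambda^{-1}|st|$.
   Context: The width of a convex body $K$ is the minimum width of a parallel slab containing $K$; $K$ is $\lambda$-fat if ${\rm width}(K)/{\rm diam}_2(K)\ge\lambda$. ${\rm geod}(s,t)$ is the infimum of Euclidean lengths of polygonal paths from $s$ to $t$ contained in $P$. *)

theory Defs
  imports "HOL-Analysis.Analysis" "HOL-Library.Extended_Real"
begin

definition convex_polygon :: "(real^2) set \<Rightarrow> bool" where
  "convex_polygon K \<longleftrightarrow> polytope K \<and> interior K \<noteq> {}"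

definition width :: "(real^2) set \<Rightarrow> real" where
  "width K = (INF u\<in>sphere (0::real^2) 1. (SUP x\<in>K. u \<bullet> x) - (INF x\<in>K. u \<bullet> x))"

definition fat :: "real \<Rightarrow> (real^2) set \<Rightarrow> bool" where
  "fat lam K \<longleftrightarrow> width K / diameter K \<ge> lam"

definition polygonal_path_in :: "(real^2) set \<Rightarrow> (real^2) list \<Rightarrow> bool" where
  "polygonal_path_in P ps \<longleftrightarrow> ps \<noteq> [] \<and>
     (\<forall>i. Suc i < length ps \<longrightarrow> closed_segment (ps ! i) (ps ! Suc i) \<subseteq> P)
     \<and> (length ps = 1 \<longrightarrow> hd ps \<in> P)"

definition poly_length :: "(real^2) list \<Rightarrow> real" where
  "poly_length ps = (\<Sum>i<length ps - 1. dist (ps ! i) (ps ! Suc i))"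

text \<open>Geodesic distance in P (value \<infinity> if no polygonal path exists).\<close>
definition geod :: "(real^2) set \<Rightarrow> real^2 \<Rightarrow> real^2 \<Rightarrow> ereal" where
  "geod P s t = (INF ps\<in>{ps. polygonal_path_in P ps \<and> hd ps = s \<and> last ps = t}.
                   ereal (poly_length ps))"

end

theory Submission
  imports Defs
begin

(* Induct on the number of obstacles whose interior meets the segment st. If st enters int(Q_i),
   let a and b be its first and last points on Q_i: the pieces sa and bt meet fewer obstacles,
   and a, b are joined along the boundary of Q_i. So it suffices to join two boundary points a, b
   of a lambda-fat convex polygon K along its boundary by a polyline of length at most
   40 |ab| / lambda.

   Such a polyline is first built outside int K from the supporting lines at a and b, with outer
   unit normals n1, n2. The path through the meeting point of the two lines has length at most
   2 |ab| / |n1 x n2|, and at most 2 |ab| if n1 . n2 >= 0. Otherwise, if |n1 x n2| < lambda / 4,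
   the two lines are nearly parallel and face each other, so the width of K is at most
   2 (|ab| + |n1 x n2| diam K); fatness then gives diam K <= 4 |ab| / lambda, and a detour around
   the far side of K is short enough. Finally, a polyline outside int K between two points of K
   can be pushed onto the boundary without getting longer, by cutting it successively with the
   halfplanes whose intersection is K. *)

section \<open>Polylines\<close>

fun segments_in :: "(real^2) set \<Rightarrow> (real^2) list \<Rightarrow> bool" where
  "segments_in S (x # y # r) \<longleftrightarrow> closed_segment x y \<subseteq> S \<and> segments_in S (y # r)"
| "segments_in S _ \<longleftrightarrow> True"

definition polyline_in :: "(real^2) set \<Rightarrow> real^2 \<Rightarrow> real^2 \<Rightarrow> (real^2) list \<Rightarrow> bool" where
  "polyline_in S a b ps \<longleftrightarrow> ps \<noteq> [] \<and> hd ps = a \<and> last ps = b \<and> segments_in S ps"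

lemma poly_length_Nil [simp]: "poly_length [] = 0"
  and poly_length_singleton [simp]: "poly_length [x] = 0"
  by (simp_all add: poly_length_def)

lemma poly_length_Cons_Cons [simp]: "poly_length (x # y # r) = dist x y + poly_length (y # r)"
proof -
  have "poly_length (x # y # r) = (\<Sum>i<Suc (length r). dist ((x # y # r) ! i) ((x # y # r) ! Suc i))"
    by (simp add: poly_length_def)
  also have "\<dots> = dist x y + (\<Sum>i<length r. dist ((y # r) ! i) ((y # r) ! Suc i))"
    by (subst sum.lessThan_Suc_shift) simp
  finally show ?thesis by (simp add: poly_length_def)
qed

lemma poly_length_nonneg: "0 \<le> poly_length ps"
  by (simp add: poly_length_def sum_nonneg)

lemma segments_in_iff_nth:
  "segments_in S ps \<longleftrightarrow> (\<forall>i. Suc i < length ps \<longrightarrow> closed_segment (ps ! i) (ps ! Suc i) \<subseteq> S)"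
proof (induction S ps rule: segments_in.induct)
  case (1 S x y r)
  show ?case
  proof
    assume "segments_in S (x # y # r)"
    then show "\<forall>i. Suc i < length (x # y # r) \<longrightarrow>
        closed_segment ((x # y # r) ! i) ((x # y # r) ! Suc i) \<subseteq> S"
      using 1 by (auto simp: nth_Cons split: nat.splits)
  next
    assume H: "\<forall>i. Suc i < length (x # y # r) \<longrightarrow>
        closed_segment ((x # y # r) ! i) ((x # y # r) ! Suc i) \<subseteq> S"
    have "closed_segment x y \<subseteq> S" using H[rule_format, of 0] by simp
    moreover have "segments_in S (y # r)" using 1 H by (metis Suc_less_eq length_Cons nth_Cons_Suc)
    ultimately show "segments_in S (x # y # r)" by simp
  qed
qed auto

lemma segments_in_mono: "segments_in S ps \<Longrightarrow> S \<subseteq> T \<Longrightarrow> segments_in T ps"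
  by (induction S ps rule: segments_in.induct) auto

lemma hd_in_if_segments_in:
  assumes "segments_in S ps" "ps \<noteq> []" "last ps \<in> S"
  shows "hd ps \<in> S"
  using assms by (induction S ps rule: segments_in.induct) auto

lemma polyline_in_mono: "polyline_in S a b ps \<Longrightarrow> S \<subseteq> T \<Longrightarrow> polyline_in T a b ps"
  by (auto simp: polyline_in_def intro: segments_in_mono)

lemma polyline_in_Cons:
  "polyline_in S b c ps \<Longrightarrow> closed_segment a b \<subseteq> S \<Longrightarrow>
     polyline_in S a c (a # ps) \<and> poly_length (a # ps) = dist a b + poly_length ps"
  by (cases ps) (auto simp: polyline_in_def)

lemma polyline_in_append:
  assumes "polyline_in S a b ps" "polyline_in S b c qs"
  shows "polyline_in S a c (ps @ tl qs)" "poly_length (ps @ tl qs) = poly_length ps + poly_length qs"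
proof -
  have "ps \<noteq> [] \<Longrightarrow> last ps = hd qs \<Longrightarrow> segments_in S ps \<Longrightarrow>
    segments_in S (ps @ tl qs) \<and> poly_length (ps @ tl qs) = poly_length ps + poly_length qs"
    using assms(2) unfolding polyline_in_def
  proof (induction ps)
    case (Cons x r)
    then show ?case by (cases r; cases qs) auto
  qed simp
  moreover have "last (ps @ tl qs) = c"
    using assms by (cases qs) (auto simp: polyline_in_def)
  ultimately show "polyline_in S a c (ps @ tl qs)" "poly_length (ps @ tl qs) = poly_length ps + poly_length qs"
    using assms by (auto simp: polyline_in_def)
qed

lemma geod_le_poly_length:
  assumes "polyline_in P s t ps" "s \<in> P"
  shows "geod P s t \<le> ereal (poly_length ps)"
proof -
  have "polygonal_path_in P ps"
    using assms unfolding polygonal_path_in_def polyline_in_def segments_in_iff_nth[symmetric] by auto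
  then show ?thesis
    using assms(1) unfolding geod_def polyline_in_def by (intro INF_lower) auto
qed

section \<open>Pushing a polyline onto the boundary of a polyhedron\<close>

lemma dist_add_dist_closed_segment:
  fixes a b :: "'a::euclidean_space"
  shows "x \<in> closed_segment a b \<Longrightarrow> dist a x + dist x b = dist a b"
  by (simp flip: between_mem_segment add: between)

lemma closed_segment_meets_hyperplane:
  fixes p q :: "'a::euclidean_space"
  assumes "g \<bullet> p \<le> \<beta>" "\<beta> \<le> g \<bullet> q"
  obtains c where "c \<in> closed_segment p q" "g \<bullet> c = \<beta>"
  using connected_ivt_hyperplane[of "closed_segment p q" p q g \<beta>] assms by auto

text \<open>A polyline leaving the halfspace \<open>g \<bullet> x \<le> \<beta>\<close> can be rerouted along the bounding line,
  provided \<open>S\<close> contains the segments between its points on that line.\<close>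

context
  fixes g :: "real^2" and \<beta> :: real and S :: "(real^2) set"
  assumes segment_on_line: "\<And>c d. c \<in> S \<Longrightarrow> d \<in> S \<Longrightarrow> g \<bullet> c = \<beta> \<Longrightarrow> g \<bullet> d = \<beta> \<Longrightarrow>
    closed_segment c d \<subseteq> S"
begin

lemma polyline_last_entry_into_halfspace:
  "segments_in S xs \<Longrightarrow> xs \<noteq> [] \<Longrightarrow> g \<bullet> last xs \<le> \<beta> \<Longrightarrow>
    segments_in (S \<inter> {x. g \<bullet> x \<le> \<beta>}) xs \<or>
    (\<exists>d ds. d \<in> S \<and> g \<bullet> d = \<beta> \<and> polyline_in (S \<inter> {x. g \<bullet> x \<le> \<beta>}) d (last xs) ds \<and>
       dist (hd xs) d + poly_length ds \<le> poly_length xs)"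
proof (induction xs rule: induct_list012)
  case (3 q r rest)
  let ?H = "{x. g \<bullet> x \<le> \<beta>}"
  have qr: "closed_segment q r \<subseteq> S" and r_rest: "segments_in S (r # rest)"
    using "3.prems" by auto
  show ?case
  proof (cases "segments_in (S \<inter> ?H) (r # rest)")
    case True
    then have "r \<in> ?H"
      using hd_in_if_segments_in[of ?H "r # rest"] segments_in_mono "3.prems"(3) by auto
    show ?thesis
    proof (cases "g \<bullet> q \<le> \<beta>")
      case True
      then have "closed_segment q r \<subseteq> ?H"
        using \<open>r \<in> ?H\<close> by (intro closed_segment_subset convex_halfspace_le) auto
      then show ?thesis using qr \<open>segments_in (S \<inter> ?H) (r # rest)\<close> by auto
    next
      case False
      obtain d where d: "d \<in> closed_segment r q" "g \<bullet> d = \<beta>"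
        using closed_segment_meets_hyperplane[of g r \<beta> q] \<open>r \<in> ?H\<close> False by auto
      have dr: "closed_segment d r \<subseteq> S \<inter> ?H"
      proof -
        have "closed_segment d r \<subseteq> closed_segment q r"
          using d by (intro closed_segment_subset) (auto simp: closed_segment_commute)
        moreover have "closed_segment d r \<subseteq> ?H"
          using d \<open>r \<in> ?H\<close> by (intro closed_segment_subset convex_halfspace_le) auto
        ultimately show ?thesis using qr by auto
      qed
      have "polyline_in (S \<inter> ?H) r (last (q # r # rest)) (r # rest)"
        using True by (simp add: polyline_in_def)
      then have "polyline_in (S \<inter> ?H) d (last (q # r # rest)) (d # r # rest)"
        and "poly_length (d # r # rest) = dist d r + poly_length (r # rest)"
        using polyline_in_Cons[OF _ dr] by blast+
      moreover have "dist q d + dist d r = dist q r"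
        using dist_add_dist_closed_segment[of d q r] d by (simp add: closed_segment_commute)
      moreover have "d \<in> S" using d qr by (auto simp: closed_segment_commute)
      ultimately show ?thesis using d by (intro disjI2 exI[of _ d] exI[of _ "d # r # rest"]) auto
    qed
  next
    case False
    then obtain d ds where "d \<in> S" "g \<bullet> d = \<beta>" "polyline_in (S \<inter> ?H) d (last (r # rest)) ds"
      "dist r d + poly_length ds \<le> poly_length (r # rest)"
      using "3.IH"(2) "3.prems" r_rest by auto
    moreover have "dist q d \<le> dist q r + dist r d" by (rule dist_triangle)
    ultimately show ?thesis by (intro disjI2 exI[of _ d] exI[of _ ds]) auto
  qed
qed auto

lemma polyline_cut_by_halfspace:
  "polyline_in S a b ps \<Longrightarrow> g \<bullet> a \<le> \<beta> \<Longrightarrow> g \<bullet> b \<le> \<beta> \<Longrightarrow>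
    \<exists>qs. polyline_in (S \<inter> {x. g \<bullet> x \<le> \<beta>}) a b qs \<and> poly_length qs \<le> poly_length ps"
proof (induction ps arbitrary: a rule: induct_list012)
  case (2 x)
  then show ?case by (intro exI[of _ "[x]"]) (auto simp: polyline_in_def)
next
  case (3 p q rest)
  let ?H = "{x. g \<bullet> x \<le> \<beta>}"
  have a: "a = p" and pH: "p \<in> ?H" and pq: "closed_segment p q \<subseteq> S"
    and q_rest: "polyline_in S q b (q # rest)"
    using "3.prems" by (auto simp: polyline_in_def)
  show ?case
  proof (cases "g \<bullet> q \<le> \<beta>")
    case True
    obtain qs where qs: "polyline_in (S \<inter> ?H) q b qs" "poly_length qs \<le> poly_length (q # rest)"
      using "3.IH"(2)[OF q_rest True "3.prems"(3)] by blast
    have "closed_segment p q \<subseteq> ?H"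
      using True pH by (intro closed_segment_subset convex_halfspace_le) auto
    then show ?thesis
      using polyline_in_Cons[OF qs(1), of p] qs(2) pq a by (intro exI[of _ "p # qs"]) auto
  next
    case False
    obtain c where c: "c \<in> closed_segment p q" "g \<bullet> c = \<beta>"
      using closed_segment_meets_hyperplane[of g p \<beta> q] pH False by auto
    have "\<not> segments_in (S \<inter> ?H) (q # rest)"
      using hd_in_if_segments_in[of ?H "q # rest"] segments_in_mono False "3.prems"(3) q_rest
      by (auto simp: polyline_in_def)
    then obtain d ds where d: "d \<in> S" "g \<bullet> d = \<beta>" "polyline_in (S \<inter> ?H) d b ds"
        "dist q d + poly_length ds \<le> poly_length (q # rest)"
      using polyline_last_entry_into_halfspace[of "q # rest"] q_rest "3.prems"(3)
      by (auto simp: polyline_in_def)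
    have "c \<in> S" using c pq by auto
    have pc: "closed_segment p c \<subseteq> S \<inter> ?H"
    proof -
      have "closed_segment p c \<subseteq> closed_segment p q"
        using c by (intro closed_segment_subset) auto
      moreover have "closed_segment p c \<subseteq> ?H"
        using c pH by (intro closed_segment_subset convex_halfspace_le) auto
      ultimately show ?thesis using pq by auto
    qed
    have cd: "closed_segment c d \<subseteq> S \<inter> ?H"
    proof -
      have "closed_segment c d \<subseteq> ?H"
        using c(2) d(2) by (intro closed_segment_subset convex_halfspace_le) auto
      then show ?thesis using segment_on_line[OF \<open>c \<in> S\<close> d(1) c(2) d(2)] by auto
    qed
    have "dist p c + dist c q = dist p q" using dist_add_dist_closed_segment[OF c(1)] .
    moreover have "dist c d \<le> dist c q + dist q d" by (rule dist_triangle)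
    moreover have "polyline_in (S \<inter> ?H) p b (p # c # ds)"
      and "poly_length (p # c # ds) = dist p c + dist c d + poly_length ds"
      using polyline_in_Cons[OF polyline_in_Cons[OF d(3) cd, THEN conjunct1] pc] 
        polyline_in_Cons[OF d(3) cd] by auto
    ultimately show ?thesis using d(4) a by (intro exI[of _ "p # c # ds"]) auto
  qed
qed (simp add: polyline_in_def)

end

lemma polyline_shorten_to_frontier:
  fixes K :: "(real^2) set"
  assumes "polyhedron K" "polyline_in (- interior K) a b ps" "a \<in> K" "b \<in> K"
  shows "\<exists>qs. polyline_in (K - interior K) a b qs \<and> poly_length qs \<le> poly_length ps"
proof -
  obtain F where F: "finite F" "K = \<Inter>F" "\<And>h. h \<in> F \<Longrightarrow> \<exists>g \<beta>. g \<noteq> 0 \<and> h = {x. g \<bullet> x \<le> \<beta>}"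
    using assms(1) unfolding polyhedron_def by blast
  have "G \<subseteq> F \<Longrightarrow> \<exists>qs. polyline_in (\<Inter>G - interior K) a b qs \<and> poly_length qs \<le> poly_length ps"
    if "finite G" for G
    using that
  proof (induction G rule: finite_induct)
    case empty
    then show ?case using assms(2) by (auto simp: Compl_eq_Diff_UNIV)
  next
    case (insert h G)
    obtain qs where qs: "polyline_in (\<Inter>G - interior K) a b qs" "poly_length qs \<le> poly_length ps"
      using insert by auto
    obtain g \<beta> where h: "g \<noteq> 0" "h = {x. g \<bullet> x \<le> \<beta>}" using F(3) insert.prems by blast
    have Kh: "K \<subseteq> h" using F(2) insert.prems by auto
    have interior_below: "interior K \<subseteq> {x. g \<bullet> x < \<beta>}"
      using interior_mono[OF Kh] h by simp
    have "convex (\<Inter>G)"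
      using F(3) insert.prems by (intro convex_Inter) (auto intro: convex_halfspace_le)
    have "closed_segment c d \<subseteq> \<Inter>G - interior K"
      if "c \<in> \<Inter>G - interior K" "d \<in> \<Inter>G - interior K" "g \<bullet> c = \<beta>" "g \<bullet> d = \<beta>" for c d
    proof -
      have "closed_segment c d \<subseteq> {x. g \<bullet> x = \<beta>}"
        using that by (intro closed_segment_subset convex_hyperplane) auto
      moreover have "closed_segment c d \<subseteq> \<Inter>G"
        using that \<open>convex (\<Inter>G)\<close> by (intro closed_segment_subset) auto
      ultimately show ?thesis using interior_below by auto
    qed
    then obtain rs where "polyline_in ((\<Inter>G - interior K) \<inter> h) a b rs" "poly_length rs \<le> poly_length qs"
      using polyline_cut_by_halfspace[OF _ qs(1)] Kh assms(3,4) h(2) by blast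
    moreover have "(\<Inter>G - interior K) \<inter> h = \<Inter>(insert h G) - interior K" by auto
    ultimately show ?case using qs(2) by (intro exI[of _ rs]) auto
  qed
  then show ?thesis using F(1,2) by auto
qed

section \<open>Polylines around a fat convex body\<close>

lemma inner_vec2: "(x::real^2) \<bullet> y = x$1*y$1 + x$2*y$2"
  by (simp add: inner_vec_def sum_2)

definition cross2 :: "real^2 \<Rightarrow> real^2 \<Rightarrow> real" where
  "cross2 x y = x$1*y$2 - x$2*y$1"

lemma inner_self_mult_inner: "(n \<bullet> n) * (u \<bullet> v) = (n \<bullet> u) * (n \<bullet> v) + cross2 n u * cross2 n v"
  unfolding inner_vec2 cross2_def by (simp add: algebra_simps)

lemma inner_self_mult_cross2: "(n \<bullet> n) * cross2 w u = (n \<bullet> w) * cross2 n u - cross2 n w * (n \<bullet> u)"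
  unfolding inner_vec2 cross2_def by (simp add: algebra_simps)

lemma cross2_anticomm: "cross2 x y = - cross2 y x"
  unfolding cross2_def by (simp add: algebra_simps)

lemma inner_square_add_cross2_square: "n \<bullet> n = 1 \<Longrightarrow> (n \<bullet> u)^2 + (cross2 n u)^2 = (norm u)^2"
proof -
  assume "n \<bullet> n = 1"
  then have "u \<bullet> u = (n \<bullet> u)^2 + (cross2 n u)^2" using inner_self_mult_inner[of n u u] by (simp add: power2_eq_square)
  then show ?thesis by (simp add: power2_norm_eq_inner)
qed

lemma abs_cross2_le_norm: "n \<bullet> n = 1 \<Longrightarrow> \<bar>cross2 n u\<bar> \<le> norm u"
proof -
  assume "n \<bullet> n = 1"
  then have "(cross2 n u)^2 \<le> (norm u)^2" using inner_square_add_cross2_square[of n u] zero_le_power2[of "n \<bullet> u"] by linarith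
  then have "\<bar>cross2 n u\<bar> \<le> \<bar>norm u\<bar>" using abs_le_square_iff[of "cross2 n u" "norm u"] by blast
  then show ?thesis by simp
qed

lemma abs_inner_le_norm_unit:
  fixes n u :: "'a::real_inner"
  shows "n \<bullet> n = 1 \<Longrightarrow> \<bar>n \<bullet> u\<bar> \<le> norm u"
proof -
  assume "n \<bullet> n = 1"
  then have "norm n = 1" by (simp add: norm_eq_sqrt_inner)
  then show ?thesis using Cauchy_Schwarz_ineq2[of n u] by simp
qed

lemma supporting_line_segment_outside_interior:
  fixes K :: "'a::euclidean_space set"
  assumes "v \<noteq> 0" "\<forall>y\<in>K. v \<bullet> y \<le> m" "v \<bullet> p = m" "v \<bullet> q = m"
  shows "closed_segment p q \<subseteq> - interior K"
proof -
  have "interior K \<subseteq> {x. v \<bullet> x < m}"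
    using interior_mono[of K "{x. v \<bullet> x \<le> m}"] assms(1,2) by auto
  moreover have "closed_segment p q \<subseteq> {x. v \<bullet> x = m}"
    using assms(3,4) by (intro closed_segment_subset convex_hyperplane) auto
  ultimately show ?thesis by auto
qed

lemma supporting_unit_normal:
  fixes K :: "'a::euclidean_space set"
  assumes "convex K" "closed K" "interior K \<noteq> {}" "x \<in> frontier K"
  shows "\<exists>n. n \<bullet> n = 1 \<and> (\<forall>y\<in>K. n \<bullet> y \<le> n \<bullet> x)"
proof -
  have ri: "rel_interior K = interior K" using rel_interior_nonempty_interior[OF assms(3)] .
  have x: "x \<in> closure K" "x \<notin> rel_interior K"
    using assms(4) unfolding ri frontier_def by blast+
  obtain a where a: "a \<noteq> 0" "\<And>y. y \<in> closure K \<Longrightarrow> a \<bullet> x \<le> a \<bullet> y"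
    and "\<And>y. y \<in> rel_interior K \<Longrightarrow> a \<bullet> x < a \<bullet> y"
    by (rule supporting_hyperplane_relative_frontier[OF assms(1) x]) blast
  define n where "n = - (1 / norm a) *\<^sub>R a"
  have "n \<bullet> n = (1 / norm a)^2 * (a \<bullet> a)" by (simp add: n_def power2_eq_square)
  also have "\<dots> = (1 / norm a)^2 * (norm a)^2" by (simp add: power2_norm_eq_inner)
  also have "\<dots> = 1" using a(1) by (simp add: field_simps)
  finally have "n \<bullet> n = 1" .
  moreover have "n \<bullet> y \<le> n \<bullet> x" if "y \<in> K" for y
  proof -
    have "a \<bullet> x \<le> a \<bullet> y" using a(2) that closure_subset by auto
    then have "- (1 / norm a) * (a \<bullet> y) \<le> - (1 / norm a) * (a \<bullet> x)"
      by (intro mult_left_mono_neg) auto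
    then show ?thesis by (simp add: n_def)
  qed
  ultimately show ?thesis by blast
qed

lemma width_le_slab:
  fixes K :: "(real^2) set"
  assumes "bounded K" "K \<noteq> {}" "n \<bullet> n = 1" "\<forall>y\<in>K. n \<bullet> y \<le> M" "\<forall>y\<in>K. m0 \<le> n \<bullet> y"
  shows "width K \<le> M - m0"
proof -
  obtain B where B: "\<forall>y\<in>K. norm y \<le> B" using assms(1) bounded_iff by blast
  have bddA: "bdd_above ((\<lambda>x. u \<bullet> x) ` K)" if "norm u = 1" for u
  proof -
    have "u \<bullet> y \<le> B" if "y \<in> K" for y
      using Cauchy_Schwarz_ineq2[of u y] B that \<open>norm u = 1\<close> by auto
    then show ?thesis by (rule bdd_aboveI2)
  qed
  have bddB: "bdd_below ((\<lambda>x. u \<bullet> x) ` K)" if "norm u = 1" for u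
  proof -
    have "- B \<le> u \<bullet> y" if "y \<in> K" for y
      using Cauchy_Schwarz_ineq2[of u y] B that \<open>norm u = 1\<close> by auto
    then show ?thesis by (rule bdd_belowI2)
  qed
  obtain y0 where y0: "y0 \<in> K" using assms(2) by blast
  have nonneg: "0 \<le> (SUP x\<in>K. u \<bullet> x) - (INF x\<in>K. u \<bullet> x)" if "norm u = 1" for u
  proof -
    have "(INF x\<in>K. u \<bullet> x) \<le> u \<bullet> y0" using cINF_lower[OF bddB[OF that] y0] .
    moreover have "u \<bullet> y0 \<le> (SUP x\<in>K. u \<bullet> x)" using cSUP_upper[OF y0 bddA[OF that]] .
    ultimately show ?thesis by linarith
  qed
  have nn: "norm n = 1" using assms(3) by (simp add: norm_eq_sqrt_inner)
  have "width K \<le> (SUP x\<in>K. n \<bullet> x) - (INF x\<in>K. n \<bullet> x)"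
    unfolding width_def
    apply (rule cINF_lower)
    using nonneg by (auto intro!: bdd_belowI[where m=0] simp: nn)
  also have "\<dots> \<le> M - m0"
  proof -
    have "(SUP x\<in>K. n \<bullet> x) \<le> M" using assms(2,4) by (intro cSUP_least) auto
    moreover have "m0 \<le> (INF x\<in>K. n \<bullet> x)" using assms(2,5) by (intro cINF_greatest) auto
    ultimately show ?thesis by linarith
  qed
  finally show ?thesis .
qed

lemma cross2_nonzero_imp_lines_meet:
  assumes "cross2 n1 n2 \<noteq> 0"
  obtains A :: "real^2" where "n1 \<bullet> A = \<alpha>" "n2 \<bullet> A = \<beta>"
proof
  let ?c = "cross2 n1 n2"
  let ?A = "vector [(\<alpha> * n2$2 - \<beta> * n1$2) / ?c, (\<beta> * n1$1 - \<alpha> * n2$1) / ?c] :: real^2"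
  have "n1 \<bullet> ?A = (n1$1 * (\<alpha> * n2$2 - \<beta> * n1$2) + n1$2 * (\<beta> * n1$1 - \<alpha> * n2$1)) / ?c"
    unfolding inner_vec2 using assms by (simp add: field_simps)
  also have "\<dots> = \<alpha> * ?c / ?c" by (simp add: cross2_def algebra_simps)
  finally show "n1 \<bullet> ?A = \<alpha>" using assms by simp
  have "n2 \<bullet> ?A = (n2$1 * (\<alpha> * n2$2 - \<beta> * n1$2) + n2$2 * (\<beta> * n1$1 - \<alpha> * n2$1)) / ?c"
    unfolding inner_vec2 using assms by (simp add: field_simps)
  also have "\<dots> = \<beta> * ?c / ?c" by (simp add: cross2_def algebra_simps)
  finally show "n2 \<bullet> ?A = \<beta>" using assms by simp
qed

lemma norm_eq_abs_cross2:
  assumes "n \<bullet> n = 1" "n \<bullet> u = 0"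
  shows "norm u = \<bar>cross2 n u\<bar>"
proof (rule power2_eq_imp_eq)
  show "(norm u)^2 = \<bar>cross2 n u\<bar>^2"
    using inner_square_add_cross2_square[OF assms(1), of u] assms(2) by simp
qed simp_all

lemma inner_eq_cross2_mult_cross2: "n \<bullet> n = 1 \<Longrightarrow> n \<bullet> u = 0 \<Longrightarrow> m \<bullet> u = cross2 n m * cross2 n u"
  using inner_self_mult_inner[of n m u] by simp

lemma norm_le_norm_diff_if_inner_nonpos:
  fixes u v :: "'a::real_inner"
  assumes "u \<bullet> v \<le> 0"
  shows "norm u \<le> norm (v - u)"
proof -
  have "(norm (v - u))^2 = (norm u)^2 + (norm v)^2 - 2 * (u \<bullet> v)"
    by (simp add: power2_norm_eq_inner inner_diff_left inner_diff_right inner_commute)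
  then have "(norm u)^2 \<le> (norm (v - u))^2" using assms zero_le_power2[of "norm v"] by linarith
  then show ?thesis by (rule power2_le_imp_le) simp
qed

lemma polyline_through_supporting_lines_meet:
  fixes K :: "(real^2) set"
  assumes n1: "n1 \<bullet> n1 = 1" "\<forall>y\<in>K. n1 \<bullet> y \<le> n1 \<bullet> a"
    and n2: "n2 \<bullet> n2 = 1" "\<forall>y\<in>K. n2 \<bullet> y \<le> n2 \<bullet> b"
    and ab: "a \<in> K" "b \<in> K" and c0: "cross2 n1 n2 \<noteq> 0"
  shows "\<exists>ps. polyline_in (- interior K) a b ps \<and>
     \<bar>cross2 n1 n2\<bar> * poly_length ps \<le> 2 * dist a b \<and> (n1 \<bullet> n2 \<ge> 0 \<longrightarrow> poly_length ps \<le> 2 * dist a b)"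
proof -
  define c where "c = cross2 n1 n2"
  obtain A where A: "n1 \<bullet> A = n1 \<bullet> a" "n2 \<bullet> A = n2 \<bullet> b"
    using cross2_nonzero_imp_lines_meet[OF c0] by blast
  define u where "u = A - a"
  define v where "v = A - b"
  have u0: "n1 \<bullet> u = 0" and v0: "n2 \<bullet> v = 0" using A by (simp_all add: u_def v_def inner_diff_right)
  have n2u: "n2 \<bullet> u = c * cross2 n1 u" and n1v: "n1 \<bullet> v = - c * cross2 n2 v"
    using inner_eq_cross2_mult_cross2[OF n1(1) u0, of n2] inner_eq_cross2_mult_cross2[OF n2(1) v0, of n1]
    by (simp_all add: c_def cross2_anticomm[of n2 n1])
  have n2u': "n2 \<bullet> u = n2 \<bullet> (b - a)" and n1v': "n1 \<bullet> v = n1 \<bullet> (a - b)"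
    using A by (simp_all add: u_def v_def inner_diff_right)
  have cu: "\<bar>c\<bar> * norm u \<le> dist a b"
    using abs_inner_le_norm_unit[OF n2(1), of "b - a"] n2u n2u' norm_eq_abs_cross2[OF n1(1) u0]
    by (simp add: abs_mult dist_norm norm_minus_commute)
  have cv: "\<bar>c\<bar> * norm v \<le> dist a b"
    using abs_inner_le_norm_unit[OF n1(1), of "a - b"] n1v n1v' norm_eq_abs_cross2[OF n2(1) v0]
    by (simp add: abs_mult dist_norm)
  have len: "poly_length [a, A, b] = norm u + norm v"
    by (simp add: u_def v_def dist_norm norm_minus_commute)
  have "n1 \<noteq> 0" "n2 \<noteq> 0" using n1(1) n2(1) by auto
  then have "polyline_in (- interior K) a b [a, A, b]"
    using supporting_line_segment_outside_interior[of n1 K "n1 \<bullet> a" a A]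
      supporting_line_segment_outside_interior[of n2 K "n2 \<bullet> b" A b] n1 n2 A
    by (auto simp: polyline_in_def)
  moreover have "poly_length [a, A, b] \<le> 2 * dist a b" if "0 \<le> n1 \<bullet> n2"
  proof -
    \<comment> \<open>\<open>a\<close> and \<open>b\<close> lie on the same side of both lines, which forces the angle at \<open>A\<close> to be obtuse\<close>
    have "0 \<le> (n2 \<bullet> u) * (n1 \<bullet> v)"
      using n2u' n1v' n1(2) n2(2) ab by (intro mult_nonneg_nonneg) (auto simp: inner_diff_right)
    then have "c * c * (cross2 n1 u * cross2 n2 v) \<le> 0" unfolding n2u n1v by (simp add: algebra_simps)
    moreover have "0 < c * c" using c0 not_real_square_gt_zero[of c] unfolding c_def by blast
    ultimately have "cross2 n1 u * cross2 n2 v \<le> 0"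
      by (metis mult_le_cancel_left_pos mult_zero_right)
    moreover have "u \<bullet> v = (n1 \<bullet> n2) * (cross2 n1 u * cross2 n2 v)"
      using inner_eq_cross2_mult_cross2[OF n1(1) u0, of v] inner_self_mult_cross2[of n2 n1 v] n2(1) v0
      by (simp add: inner_commute algebra_simps)
    ultimately have "u \<bullet> v \<le> 0" using that by (simp add: mult_nonneg_nonpos)
    then have "norm u \<le> dist a b" "norm v \<le> dist a b"
      using norm_le_norm_diff_if_inner_nonpos[of u v] norm_le_norm_diff_if_inner_nonpos[of v u]
      by (simp_all add: u_def v_def dist_norm norm_minus_commute inner_commute)
    then show ?thesis using len by linarith
  qed
  moreover have "\<bar>c\<bar> * poly_length [a, A, b] \<le> 2 * dist a b"
    using cu cv unfolding len by (simp add: distrib_left)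
  ultimately have "polyline_in (- interior K) a b [a, A, b] \<and> \<bar>c\<bar> * poly_length [a, A, b] \<le> 2 * dist a b
    \<and> (0 \<le> n1 \<bullet> n2 \<longrightarrow> poly_length [a, A, b] \<le> 2 * dist a b)" by blast
  then show ?thesis unfolding c_def by blast
qed

lemma ray_meets_hyperplane:
  fixes a r v :: "'a::real_inner"
  assumes "norm r = 1" "1 \<le> v \<bullet> r"
  obtains s where "v \<bullet> (a + s *\<^sub>R r) = m" "\<bar>s\<bar> \<le> \<bar>m - v \<bullet> a\<bar>"
proof
  let ?s = "(m - v \<bullet> a) / (v \<bullet> r)"
  show "v \<bullet> (a + ?s *\<^sub>R r) = m" using assms(2) by (simp add: inner_add_right)
  show "\<bar>?s\<bar> \<le> \<bar>m - v \<bullet> a\<bar>"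
  proof -
    have "\<bar>?s\<bar> = \<bar>m - v \<bullet> a\<bar> / (v \<bullet> r)" using assms(2) by simp
    also have "\<dots> \<le> \<bar>m - v \<bullet> a\<bar> / 1" using assms(2) by (intro divide_left_mono) auto
    finally show ?thesis by simp
  qed
qed

definition rot90 :: "real^2 \<Rightarrow> real^2" where
  "rot90 x = vector [- x$2, x$1]"

lemma inner_rot90_self [simp]: "x \<bullet> rot90 x = 0"
  and inner_rot90_rot90 [simp]: "rot90 x \<bullet> rot90 y = x \<bullet> y"
  by (simp_all add: rot90_def inner_vec2 algebra_simps)

lemma polyline_around_far_side:
  fixes K :: "(real^2) set"
  assumes n1: "n1 \<bullet> n1 = 1" "\<forall>y\<in>K. n1 \<bullet> y \<le> n1 \<bullet> a"
    and n2: "n2 \<bullet> n2 = 1" "\<forall>y\<in>K. n2 \<bullet> y \<le> n2 \<bullet> b"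
    and ab: "a \<in> K" "b \<in> K" and opposite: "n1 \<bullet> n2 < 0" and D: "\<forall>y\<in>K. dist y a \<le> D"
  shows "\<exists>ps. polyline_in (- interior K) a b ps \<and> poly_length ps \<le> 8 * D + 5 * dist a b"
proof -
  \<comment> \<open>walk along the supporting lines at \<open>a\<close> and \<open>b\<close> (directions \<open>r1\<close>, \<open>r2\<close>) until a line
    with normal \<open>v\<close> beyond \<open>K\<close>\<close>
  define r1 where "r1 = rot90 n1"
  define r2 where "r2 = - rot90 n2"
  define v where "v = r1 + r2"
  define m where "m = v \<bullet> a + 2 * D"
  have D0: "0 \<le> D" using D ab(1) by force
  have r1: "norm r1 = 1" "n1 \<bullet> r1 = 0" and r2: "norm r2 = 1" "n2 \<bullet> r2 = 0"
    using n1(1) n2(1) by (simp_all add: r1_def r2_def norm_eq_sqrt_inner)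
  have "1 \<le> v \<bullet> r1" "1 \<le> v \<bullet> r2"
    using n1(1) n2(1) opposite
    by (simp_all add: v_def r1_def r2_def inner_add_left inner_diff_right inner_commute)
  moreover have "norm v \<le> 2" using norm_triangle_ineq[of r1 r2] r1 r2 by (simp add: v_def)
  ultimately have "v \<noteq> 0" by auto
  have v_bound: "\<forall>y\<in>K. v \<bullet> y \<le> m"
  proof
    fix y assume "y \<in> K"
    have "v \<bullet> (y - a) \<le> norm v * norm (y - a)" by (simp add: norm_cauchy_schwarz)
    also have "\<dots> \<le> 2 * D"
      using \<open>norm v \<le> 2\<close> D \<open>y \<in> K\<close> by (intro mult_mono) (auto simp: dist_norm)
    finally show "v \<bullet> y \<le> m" by (simp add: m_def inner_diff_right)
  qed
  obtain s1 where s1: "v \<bullet> (a + s1 *\<^sub>R r1) = m" "\<bar>s1\<bar> \<le> 2 * D"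
    using ray_meets_hyperplane[OF r1(1) \<open>1 \<le> v \<bullet> r1\<close>, of a m] D0 by (auto simp: m_def)
  obtain s2 where s2: "v \<bullet> (b + s2 *\<^sub>R r2) = m" "\<bar>s2\<bar> \<le> \<bar>m - v \<bullet> b\<bar>"
    using ray_meets_hyperplane[OF r2(1) \<open>1 \<le> v \<bullet> r2\<close>] by blast
  define P1 where "P1 = a + s1 *\<^sub>R r1"
  define P2 where "P2 = b + s2 *\<^sub>R r2"
  have "\<bar>v \<bullet> (a - b)\<bar> \<le> 2 * dist a b"
    using Cauchy_Schwarz_ineq2[of v "a - b"] mult_right_mono[OF \<open>norm v \<le> 2\<close> norm_ge_zero[of "a - b"]]
    by (simp add: dist_norm)
  then have "\<bar>s2\<bar> \<le> 2 * D + 2 * dist a b" using s2(2) D0 by (simp add: m_def inner_diff_right)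
  moreover have "dist a P1 = \<bar>s1\<bar>" "dist P2 b = \<bar>s2\<bar>" using r1 r2 by (simp_all add: P1_def P2_def dist_norm)
  moreover have "dist P1 P2 \<le> dist P1 a + dist a b + dist b P2"
    using dist_triangle[of P1 P2 a] dist_triangle[of a P2 b] by linarith
  ultimately have "poly_length [a, P1, P2, b] \<le> 8 * D + 5 * dist a b"
    using s1(2) by (simp add: dist_commute)
  moreover have "polyline_in (- interior K) a b [a, P1, P2, b]"
  proof -
    have "n1 \<bullet> P1 = n1 \<bullet> a" "n2 \<bullet> P2 = n2 \<bullet> b"
      using r1 r2 by (simp_all add: P1_def P2_def inner_add_right)
    moreover have "n1 \<noteq> 0" "n2 \<noteq> 0" using n1(1) n2(1) by auto
    ultimately show ?thesis
      using supporting_line_segment_outside_interior[of n1 K "n1 \<bullet> a" a P1]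
        supporting_line_segment_outside_interior[of v K m P1 P2]
        supporting_line_segment_outside_interior[of n2 K "n2 \<bullet> b" P2 b]
        n1 n2 s1(1) s2(1) \<open>v \<noteq> 0\<close> v_bound
      by (auto simp: polyline_in_def P1_def P2_def)
  qed
  ultimately show ?thesis by blast
qed

lemma width_le_nearly_opposite_normals:
  fixes K :: "(real^2) set"
  assumes n1: "n1 \<bullet> n1 = 1" "\<forall>y\<in>K. n1 \<bullet> y \<le> n1 \<bullet> a"
    and n2: "n2 \<bullet> n2 = 1" "\<forall>y\<in>K. n2 \<bullet> y \<le> n2 \<bullet> b"
    and ab: "a \<in> K" "b \<in> K" and opposite: "n1 \<bullet> n2 \<le> - 1/2"
    and D: "\<forall>y\<in>K. dist y a \<le> D" and "bounded K"
  shows "width K \<le> 2 * (dist a b + \<bar>cross2 n1 n2\<bar> * D)"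
proof -
  define c where "c = cross2 n1 n2"
  define B where "B = dist a b + \<bar>c\<bar> * D"
  have "n1 \<bullet> a - 2 * B \<le> n1 \<bullet> y" if "y \<in> K" for y
  proof -
    define u where "u = y - a"
    have depth: "0 \<le> - (n1 \<bullet> u)" using n1(2) that by (simp add: u_def inner_diff_right)
    have "n2 \<bullet> u \<le> n2 \<bullet> (b - a)" using n2(2) that by (simp add: u_def inner_diff_right)
    also have "\<dots> \<le> dist a b"
      using abs_inner_le_norm_unit[OF n2(1), of "b - a"] by (simp add: dist_norm norm_minus_commute)
    finally have "n2 \<bullet> u \<le> dist a b" .
    moreover have "n2 \<bullet> u = (n1 \<bullet> n2) * (n1 \<bullet> u) + c * cross2 n1 u"
      using inner_self_mult_inner[of n1 n2 u] n1(1) by (simp add: c_def)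
    moreover have "\<bar>cross2 n1 u\<bar> \<le> D"
      using abs_cross2_le_norm[OF n1(1), of u] D that by (auto simp: u_def dist_norm)
    then have "\<bar>c * cross2 n1 u\<bar> \<le> \<bar>c\<bar> * D" by (simp add: abs_mult mult_left_mono)
    moreover have "(1/2) * - (n1 \<bullet> u) \<le> - (n1 \<bullet> n2) * - (n1 \<bullet> u)"
      using opposite depth by (intro mult_right_mono) auto
    ultimately have "(1/2) * - (n1 \<bullet> u) \<le> B" unfolding B_def by linarith
    then show ?thesis by (simp add: u_def inner_diff_right)
  qed
  then have "width K \<le> n1 \<bullet> a - (n1 \<bullet> a - 2 * B)"
    using width_le_slab[OF \<open>bounded K\<close> _ n1(1) n1(2)] ab(1) by blast
  then show ?thesis by (simp add: B_def c_def)
qed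

lemma polyline_around_fat_body_opposite_normals:
  fixes K :: "(real^2) set"
  assumes n1: "n1 \<bullet> n1 = 1" "\<forall>y\<in>K. n1 \<bullet> y \<le> n1 \<bullet> a"
    and n2: "n2 \<bullet> n2 = 1" "\<forall>y\<in>K. n2 \<bullet> y \<le> n2 \<bullet> b"
    and ab: "a \<in> K" "b \<in> K" and opposite: "n1 \<bullet> n2 < 0" and "bounded K"
    and fat: "lam * diameter K \<le> width K" and lam: "0 < lam" "lam \<le> 1"
  shows "\<exists>ps. polyline_in (- interior K) a b ps \<and> lam * poly_length ps \<le> 40 * dist a b"
proof -
  define L where "L = dist a b"
  define D where "D = diameter K"
  define c where "c = cross2 n1 n2"
  have L0: "0 \<le> L" by (simp add: L_def)
  have Dd: "\<forall>y\<in>K. dist y a \<le> D"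
    using diameter_bounded_bound[OF \<open>bounded K\<close> _ ab(1)] by (simp add: D_def)
  then have D0: "0 \<le> D" using ab(1) by force
  consider (apex) "lam \<le> 4 * \<bar>c\<bar>" | (detour) "4 * \<bar>c\<bar> < lam" by linarith
  then show ?thesis
  proof cases
    case apex
    then have "cross2 n1 n2 \<noteq> 0" using lam by (auto simp: c_def)
    then obtain ps where ps: "polyline_in (- interior K) a b ps" "\<bar>c\<bar> * poly_length ps \<le> 2 * L"
      using polyline_through_supporting_lines_meet[OF n1 n2 ab] by (auto simp: c_def L_def)
    have "lam * poly_length ps \<le> (4 * \<bar>c\<bar>) * poly_length ps"
      using apex poly_length_nonneg by (intro mult_right_mono) auto
    then have "lam * poly_length ps \<le> 40 * L" using ps(2) L0 by linarith
    then show ?thesis using ps(1) by (auto simp: L_def)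
  next
    case detour
    \<comment> \<open>the supporting lines at \<open>a\<close> and \<open>b\<close> are nearly parallel, so \<open>K\<close> is thin compared to \<open>L\<close>\<close>
    have "(n1 \<bullet> n2)^2 + c^2 = 1"
      using inner_square_add_cross2_square[OF n1(1), of n2] n2(1) by (simp add: c_def power2_norm_eq_inner)
    moreover have "\<bar>c\<bar> < 1/2" using detour lam by linarith
    then have "c^2 < 1/4" using power_strict_mono[of "\<bar>c\<bar>" "1/2" 2] by (simp add: power2_abs power_divide)
    ultimately have "(1/2)^2 < (- (n1 \<bullet> n2))^2" by (simp add: power_divide)
    then have "n1 \<bullet> n2 \<le> - 1/2" using opposite power_less_imp_less_base[of "1/2" 2 "- (n1 \<bullet> n2)"] by simp
    then have "lam * D \<le> 2 * L + 2 * (\<bar>c\<bar> * D)"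
      using width_le_nearly_opposite_normals[OF n1 n2 ab _ Dd \<open>bounded K\<close>] fat by (simp add: c_def L_def D_def)
    moreover have "(2 * \<bar>c\<bar>) * D \<le> (lam / 2) * D" using detour D0 by (intro mult_right_mono) auto
    then have "2 * (\<bar>c\<bar> * D) \<le> lam * D / 2" by simp
    ultimately have lam_D: "lam * D \<le> 4 * L" by linarith
    obtain ps where ps: "polyline_in (- interior K) a b ps" "poly_length ps \<le> 8 * D + 5 * L"
      using polyline_around_far_side[OF n1 n2 ab opposite Dd] by (auto simp: L_def)
    have "lam * poly_length ps \<le> 8 * (lam * D) + 5 * (lam * L)"
      using mult_left_mono[OF ps(2), of lam] lam by (simp add: algebra_simps)
    also have "\<dots> \<le> 40 * L"
      using lam_D mult_right_mono[OF lam(2) L0] L0 by linarith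
    finally show ?thesis using ps by (auto simp: L_def)
  qed
qed

lemma polyline_around_fat_convex_body:
  fixes K :: "(real^2) set"
  assumes K: "compact K" "convex K" "interior K \<noteq> {}" and ab: "a \<in> frontier K" "b \<in> frontier K"
    and fat: "fat lam K" and lam: "0 < lam" "lam \<le> 1"
  shows "\<exists>ps. polyline_in (- interior K) a b ps \<and> lam * poly_length ps \<le> 40 * dist a b"
proof (cases "a = b")
  case True
  then show ?thesis by (intro exI[of _ "[a]"]) (auto simp: polyline_in_def)
next
  case False
  have "closed K" "bounded K" using K compact_imp_closed compact_imp_bounded by auto
  then have aK: "a \<in> K" and bK: "b \<in> K" using ab frontier_subset_closed by auto
  have "0 < dist a b" using False by simp
  also have "dist a b \<le> diameter K" using diameter_bounded_bound[OF \<open>bounded K\<close> aK bK] .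
  finally have "lam * diameter K \<le> width K" using fat by (simp add: fat_def pos_le_divide_eq)
  obtain n1 where n1: "n1 \<bullet> n1 = 1" "\<forall>y\<in>K. n1 \<bullet> y \<le> n1 \<bullet> a"
    using supporting_unit_normal[OF K(2) \<open>closed K\<close> K(3) ab(1)] by blast
  obtain n2 where n2: "n2 \<bullet> n2 = 1" "\<forall>y\<in>K. n2 \<bullet> y \<le> n2 \<bullet> b"
    using supporting_unit_normal[OF K(2) \<open>closed K\<close> K(3) ab(2)] by blast
  have short: "lam * poly_length ps \<le> 40 * dist a b" if "poly_length ps \<le> 2 * dist a b" for ps
    using mult_right_mono[OF lam(2) poly_length_nonneg[of ps]] that zero_le_dist[of a b] by linarith
  consider "n1 \<bullet> n2 < 0" | "0 \<le> n1 \<bullet> n2" "cross2 n1 n2 \<noteq> 0" | "0 \<le> n1 \<bullet> n2" "cross2 n1 n2 = 0"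
    by linarith
  then show ?thesis
  proof cases
    case 1
    then show ?thesis
      using polyline_around_fat_body_opposite_normals[OF n1 n2 aK bK]
        \<open>bounded K\<close> \<open>lam * diameter K \<le> width K\<close> lam by blast
  next
    case 2
    then show ?thesis using polyline_through_supporting_lines_meet[OF n1 n2 aK bK] short by blast
  next
    case 3
    have "(n1 \<bullet> n2)^2 = 1"
      using 3 inner_square_add_cross2_square[OF n1(1), of n2] n2(1) by (simp add: power2_norm_eq_inner)
    then have "n1 \<bullet> n2 = 1" using 3 by (simp add: power2_eq_1_iff)
    then have "(norm (n1 - n2))^2 = 0"
      using n1(1) n2(1) by (simp add: power2_norm_eq_inner inner_diff_left inner_diff_right inner_commute[of n2 n1])
    then have "n1 = n2" by simp
    then have "n1 \<bullet> b = n1 \<bullet> a" using n1(2) n2(2) aK bK by (metis order_antisym)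
    then have "polyline_in (- interior K) a b [a, b]"
      using supporting_line_segment_outside_interior[of n1 K "n1 \<bullet> a" a b] n1 by (fastforce simp: polyline_in_def)
    then show ?thesis using short[of "[a, b]"] by auto
  qed
qed

lemma polyline_along_frontier_of_fat_polygon:
  assumes "convex_polygon K" "a \<in> frontier K" "b \<in> frontier K" "fat lam K" "0 < lam" "lam \<le> 1"
  shows "\<exists>ps. polyline_in (frontier K) a b ps \<and> lam * poly_length ps \<le> 40 * dist a b"
proof -
  have "polytope K" "interior K \<noteq> {}" using assms(1) by (auto simp: convex_polygon_def)
  then have "compact K" "convex K" "closed K" "polyhedron K"
    using polytope_imp_compact polytope_imp_convex polytope_imp_closed polytope_imp_polyhedron by auto
  obtain ps where ps: "polyline_in (- interior K) a b ps" "lam * poly_length ps \<le> 40 * dist a b"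
    using polyline_around_fat_convex_body[OF \<open>compact K\<close> \<open>convex K\<close> \<open>interior K \<noteq> {}\<close> assms(2-6)] by blast
  have "a \<in> K" "b \<in> K" using assms(2,3) frontier_subset_closed[OF \<open>closed K\<close>] by auto
  then obtain qs where qs: "polyline_in (K - interior K) a b qs" "poly_length qs \<le> poly_length ps"
    using polyline_shorten_to_frontier[OF \<open>polyhedron K\<close> ps(1)] by blast
  have "K - interior K = frontier K" using \<open>closed K\<close> by (simp add: frontier_def closure_closed)
  moreover have "lam * poly_length qs \<le> lam * poly_length ps"
    using qs(2) assms(5) by simp
  ultimately show ?thesis using qs(1) ps(2) by (intro exI[of _ qs]) auto
qed

section \<open>Avoiding the obstacles\<close>

lemma dist_affine_combinations:
  fixes s t :: "'a::real_normed_vector"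
  shows "dist ((1 - x) *\<^sub>R s + x *\<^sub>R t) ((1 - y) *\<^sub>R s + y *\<^sub>R t) = \<bar>x - y\<bar> * dist s t"
proof -
  have "(1 - x) *\<^sub>R s + x *\<^sub>R t - ((1 - y) *\<^sub>R s + y *\<^sub>R t) = (x - y) *\<^sub>R (t - s)"
    by (simp add: algebra_simps)
  then show ?thesis by (simp add: dist_norm norm_minus_commute[of t s])
qed

lemma closed_segment_closer_point:
  fixes s t :: "'a::euclidean_space"
  assumes a: "a \<in> closed_segment s t" and b: "b \<in> closed_segment s t" and ab: "dist s a \<le> dist s b"
  shows "a \<in> closed_segment s b"
proof -
  obtain u where u: "0 \<le> u" "u \<le> 1" "a = (1 - u) *\<^sub>R s + u *\<^sub>R t"
    using a by (auto simp: closed_segment_def)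
  obtain v where v: "0 \<le> v" "v \<le> 1" "b = (1 - v) *\<^sub>R s + v *\<^sub>R t"
    using b by (auto simp: closed_segment_def)
  have sa: "dist s a = u * dist s t" and sb: "dist s b = v * dist s t"
    and dab: "dist a b = \<bar>u - v\<bar> * dist s t"
    using dist_affine_combinations[where x=0 and y=u] dist_affine_combinations[where x=0 and y=v]
      dist_affine_combinations[where x=u and y=v] u v by simp_all
  have "dist s b = dist s a + dist a b"
  proof (cases "s = t")
    case False
    then have "u \<le> v" using ab unfolding sa sb by (simp add: mult_le_cancel_right)
    then show ?thesis unfolding sa sb dab by (simp add: algebra_simps)
  qed (use sa sb dab in simp)
  then show ?thesis by (simp flip: between_mem_segment add: between)
qed

lemma closed_segment_first_hit:
  fixes s t :: "'a::euclidean_space"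
  assumes "closed Q" "s \<notin> interior Q" "closed_segment s t \<inter> Q \<noteq> {}"
  obtains a where "a \<in> closed_segment s t" "a \<in> frontier Q" "closed_segment s a \<inter> interior Q = {}"
    "\<And>x. x \<in> closed_segment s t \<inter> Q \<Longrightarrow> dist s a \<le> dist s x"
proof -
  obtain a where a: "a \<in> closed_segment s t \<inter> Q" and min: "\<And>x. x \<in> closed_segment s t \<inter> Q \<Longrightarrow> dist s a \<le> dist s x"
    using distance_attains_inf[of "closed_segment s t \<inter> Q" s] assms(1,3) by (metis closed_Int closed_segment)
  have sub: "closed_segment s a \<subseteq> closed_segment s t"
    using a by (intro closed_segment_subset) auto
  have "a \<notin> interior Q"
  proof
    assume aQ: "a \<in> interior Q"
    then have "a \<noteq> s" using assms(2) by auto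
    then have "a \<in> closure (open_segment s a)" by (simp add: closure_open_segment)
    then obtain y where y: "y \<in> open_segment s a" "y \<in> interior Q"
      using open_Int_closure_eq_empty[of "interior Q" "open_segment s a"] aQ by blast
    have "y \<in> closed_segment s t \<inter> Q" using y sub interior_subset by (auto simp: open_closed_segment)
    moreover have "dist s y < dist s a" using dist_in_open_segment[OF y(1)] by (simp add: dist_commute)
    ultimately show False using min by fastforce
  qed
  moreover have "closed_segment s a \<inter> interior Q = {}"
  proof -
    have "x = a" if "x \<in> closed_segment s a" "x \<in> interior Q" for x
    proof -
      have "dist s a \<le> dist s x" using that sub interior_subset min by blast
      moreover have "dist s x + dist x a = dist s a"
        using dist_add_dist_closed_segment[OF that(1)] .
      ultimately have "dist x a \<le> 0" by linarith
      then show "x = a" by simp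
    qed
    then show ?thesis using \<open>a \<notin> interior Q\<close> by blast
  qed
  moreover have "a \<in> frontier Q"
    using a \<open>a \<notin> interior Q\<close> assms(1) by (simp add: frontier_def closure_closed)
  ultimately show ?thesis
    using that a min by blast
qed
lemma closed_segment_entry_exit:
  fixes s t :: "'a::euclidean_space"
  assumes "closed Q" "s \<notin> interior Q" "t \<notin> interior Q" "closed_segment s t \<inter> interior Q \<noteq> {}"
  obtains a b where "a \<in> closed_segment s t" "b \<in> closed_segment s t" "a \<in> frontier Q" "b \<in> frontier Q"
    "closed_segment s a \<inter> interior Q = {}" "closed_segment b t \<inter> interior Q = {}"
    "dist s a + dist a b + dist b t = dist s t"
proof -
  have hit: "closed_segment s t \<inter> Q \<noteq> {}" "closed_segment t s \<inter> Q \<noteq> {}"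
    using assms(4) interior_subset by (fastforce simp: closed_segment_commute)+
  obtain a where a: "a \<in> closed_segment s t" "a \<in> frontier Q" "closed_segment s a \<inter> interior Q = {}"
    and a_first: "\<And>x. x \<in> closed_segment s t \<inter> Q \<Longrightarrow> dist s a \<le> dist s x"
    using closed_segment_first_hit[OF assms(1,2) hit(1)] by blast
  obtain b where b: "b \<in> closed_segment s t" "b \<in> frontier Q" "closed_segment b t \<inter> interior Q = {}"
    using closed_segment_first_hit[OF assms(1,3) hit(2)] by (metis closed_segment_commute)
  have "b \<in> Q" using b(2) frontier_subset_closed[OF assms(1)] by blast
  then have "a \<in> closed_segment s b" using closed_segment_closer_point[OF a(1) b(1)] a_first b(1) by blast
  then have "dist s a + dist a b + dist b t = dist s t"
    using dist_add_dist_closed_segment[of a s b] dist_add_dist_closed_segment[OF b(1)] by linarith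
  then show ?thesis using that a b by blast
qed

lemma frontier_subset_Diff_interiors:
  assumes "i \<in> I" "closed (Q i)" "Q i \<subseteq> P0" "\<And>j. j \<in> I \<Longrightarrow> j \<noteq> i \<Longrightarrow> Q i \<inter> Q j = {}"
  shows "frontier (Q i) \<subseteq> P0 - (\<Union>j\<in>I. interior (Q j))"
proof
  fix x assume x: "x \<in> frontier (Q i)"
  then have "x \<in> Q i" "x \<notin> interior (Q i)"
    using frontier_subset_closed[OF assms(2)] by (auto simp: frontier_def)
  then show "x \<in> P0 - (\<Union>j\<in>I. interior (Q j))"
    using assms(3,4) interior_subset by fastforce
qed

lemma polyline_avoiding_obstacles:
  fixes P0 :: "(real^2) set" and Q :: "nat \<Rightarrow> (real^2) set" and I :: "nat set"
  defines "P \<equiv> P0 - (\<Union>i\<in>I. interior (Q i))"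
  assumes "finite I" "convex P0" "1 \<le> C"
    and closed: "\<And>i. i \<in> I \<Longrightarrow> closed (Q i)"
    and frontier_in: "\<And>i. i \<in> I \<Longrightarrow> frontier (Q i) \<subseteq> P"
    and around: "\<And>i a b. i \<in> I \<Longrightarrow> a \<in> frontier (Q i) \<Longrightarrow> b \<in> frontier (Q i) \<Longrightarrow>
      \<exists>ps. polyline_in (frontier (Q i)) a b ps \<and> poly_length ps \<le> C * dist a b"
    and "s \<in> P" "t \<in> P"
  shows "\<exists>ps. polyline_in P s t ps \<and> poly_length ps \<le> C * dist s t"
  using \<open>s \<in> P\<close> \<open>t \<in> P\<close>
proof (induction "card {i\<in>I. closed_segment s t \<inter> interior (Q i) \<noteq> {}}" arbitrary: s t rule: less_induct)
  case less
  show ?case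
  proof (cases "\<exists>i\<in>I. closed_segment s t \<inter> interior (Q i) \<noteq> {}")
    case False
    have "closed_segment s t \<subseteq> P0"
      using less.prems \<open>convex P0\<close> by (intro closed_segment_subset) (auto simp: P_def)
    then have "polyline_in P s t [s, t]" using False by (auto simp: polyline_in_def P_def)
    then show ?thesis using mult_right_mono[OF \<open>1 \<le> C\<close> zero_le_dist[of s t]] by fastforce
  next
    case True
    then obtain i where i: "i \<in> I" "closed_segment s t \<inter> interior (Q i) \<noteq> {}" by blast
    moreover have "s \<notin> interior (Q i)" "t \<notin> interior (Q i)" using less.prems i(1) by (auto simp: P_def)
    ultimately obtain a b where ab: "a \<in> closed_segment s t" "b \<in> closed_segment s t"
      "a \<in> frontier (Q i)" "b \<in> frontier (Q i)"
      "closed_segment s a \<inter> interior (Q i) = {}" "closed_segment b t \<inter> interior (Q i) = {}"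
      and dist_sum: "dist s a + dist a b + dist b t = dist s t"
      using closed_segment_entry_exit[OF closed] by metis
    have fewer: "card {j\<in>I. closed_segment x y \<inter> interior (Q j) \<noteq> {}}
        < card {j\<in>I. closed_segment s t \<inter> interior (Q j) \<noteq> {}}"
      if "x \<in> closed_segment s t" "y \<in> closed_segment s t" "closed_segment x y \<inter> interior (Q i) = {}" for x y
    proof (rule psubset_card_mono)
      have "closed_segment x y \<subseteq> closed_segment s t"
        using that by (intro closed_segment_subset) auto
      then have "{j\<in>I. closed_segment x y \<inter> interior (Q j) \<noteq> {}}
          \<subseteq> {j\<in>I. closed_segment s t \<inter> interior (Q j) \<noteq> {}}" by auto
      moreover have "i \<notin> {j\<in>I. closed_segment x y \<inter> interior (Q j) \<noteq> {}}" using that(3) by simp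
      moreover have "i \<in> {j\<in>I. closed_segment s t \<inter> interior (Q j) \<noteq> {}}" using i by simp
      ultimately show "{j\<in>I. closed_segment x y \<inter> interior (Q j) \<noteq> {}}
          \<subset> {j\<in>I. closed_segment s t \<inter> interior (Q j) \<noteq> {}}" by blast
    qed (simp add: \<open>finite I\<close>)
    obtain ps1 where ps1: "polyline_in P s a ps1" "poly_length ps1 \<le> C * dist s a"
      using less.hyps[OF fewer[OF _ ab(1) ab(5)]] less.prems(1) ab(3) frontier_in[OF i(1)] by auto
    obtain ps3 where ps3: "polyline_in P b t ps3" "poly_length ps3 \<le> C * dist b t"
      using less.hyps[OF fewer[OF ab(2) _ ab(6)]] less.prems(2) ab(4) frontier_in[OF i(1)] by auto
    obtain ps2 where ps2: "polyline_in (frontier (Q i)) a b ps2" "poly_length ps2 \<le> C * dist a b"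
      using around[OF i(1) ab(3,4)] by blast
    note ps12 = polyline_in_append[OF ps1(1) polyline_in_mono[OF ps2(1) frontier_in[OF i(1)]]]
    note ps123 = polyline_in_append[OF ps12(1) ps3(1)]
    have "poly_length ((ps1 @ tl ps2) @ tl ps3) \<le> C * (dist s a + dist a b + dist b t)"
      using ps1(2) ps2(2) ps3(2) unfolding ps123(2) ps12(2) by (simp add: algebra_simps)
    then show ?thesis using ps123(1) dist_sum by auto
  qed
qed

theorem corollary2:
  "\<exists>C>0. \<forall>(lam::real) (h::nat) (P0::(real^2) set) (Q::nat \<Rightarrow> (real^2) set) s t.
     0 < lam \<and> lam \<le> 1 \<and> convex_polygon P0 \<and>
     (\<forall>i\<in>{1..h}. convex_polygon (Q i) \<and> fat lam (Q i) \<and> Q i \<subseteq> interior P0) \<and>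
     (\<forall>i\<in>{1..h}. \<forall>j\<in>{1..h}. i \<noteq> j \<longrightarrow> Q i \<inter> Q j = {}) \<and>
     s \<in> P0 - (\<Union>i\<in>{1..h}. interior (Q i)) \<and> t \<in> P0 - (\<Union>i\<in>{1..h}. interior (Q i))
     \<longrightarrow> geod (P0 - (\<Union>i\<in>{1..h}. interior (Q i))) s t \<le> ereal (C / lam * dist s t)"
proof (intro exI[of _ 40] conjI allI impI)
  fix lam :: real and h :: nat and P0 :: "(real^2) set" and Q :: "nat \<Rightarrow> (real^2) set" and s t
  let ?P = "P0 - (\<Union>i\<in>{1..h}. interior (Q i))"
  assume H: "0 < lam \<and> lam \<le> 1 \<and> convex_polygon P0 \<and>
     (\<forall>i\<in>{1..h}. convex_polygon (Q i) \<and> fat lam (Q i) \<and> Q i \<subseteq> interior P0) \<and>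
     (\<forall>i\<in>{1..h}. \<forall>j\<in>{1..h}. i \<noteq> j \<longrightarrow> Q i \<inter> Q j = {}) \<and> s \<in> ?P \<and> t \<in> ?P"
  then have lam: "0 < lam" "lam \<le> 1" and "convex_polygon P0" and st: "s \<in> ?P" "t \<in> ?P"
    and Q: "\<And>i. i \<in> {1..h} \<Longrightarrow> convex_polygon (Q i) \<and> fat lam (Q i) \<and> Q i \<subseteq> interior P0"
    and disjoint: "\<And>i j. i \<in> {1..h} \<Longrightarrow> j \<in> {1..h} \<Longrightarrow> i \<noteq> j \<Longrightarrow> Q i \<inter> Q j = {}"
    by auto
  have Q_closed: "closed (Q i)" if "i \<in> {1..h}" for i
    using Q[OF that] by (auto simp: convex_polygon_def intro: polytope_imp_closed)
  have around: "\<exists>ps. polyline_in (frontier (Q i)) a b ps \<and> poly_length ps \<le> 40 / lam * dist a b"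
    if "i \<in> {1..h}" "a \<in> frontier (Q i)" "b \<in> frontier (Q i)" for i a b
    using polyline_along_frontier_of_fat_polygon[of "Q i" a b lam] Q[OF that(1)] that(2,3) lam
    by (simp add: mult.commute pos_le_divide_eq)
  have "frontier (Q i) \<subseteq> ?P" if "i \<in> {1..h}" for i
    using frontier_subset_Diff_interiors[of i "{1..h}" Q P0, OF that Q_closed[OF that]]
      Q[OF that] interior_subset[of P0] disjoint[OF that] by blast
  moreover have "convex P0" using \<open>convex_polygon P0\<close> polytope_imp_convex by (auto simp: convex_polygon_def)
  moreover have "1 \<le> 40 / lam" using lam by simp
  ultimately obtain ps where ps: "polyline_in ?P s t ps" "poly_length ps \<le> 40 / lam * dist s t"
    using polyline_avoiding_obstacles[of "{1..h}" P0 "40 / lam" Q, OF _ _ _ Q_closed _ around st] by auto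
  have "geod ?P s t \<le> ereal (poly_length ps)" using geod_le_poly_length[OF ps(1) st(1)] .
  also have "\<dots> \<le> ereal (40 / lam * dist s t)" using ps(2) by simp
  finally show "geod ?P s t \<le> ereal (40 / lam * dist s t)" .
qed simp
end
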